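(* Let $T_1$ and $T_2$ be two continuous transitive maps of a compact metric space $X$ which commute ($T_1\circ T_2=T_2\circ T_1$). Then $G_k(T_1)=G_k(T_2)$ for all $k\ge1$. In particular, if $T$ and $T^m$ (for some $m\ge2$) are both transitive, then $G_k(T)=G_k(T^m)$ for all $k\ge1$.
   Context: A continuous map $S:X\to X$ is transitive if some orbit $\{S^nx:n\ge0\}$ is dense in $X$. For such $S$: $G_0(S)$ is the set of $\lambda\in\mathbb{C}$ for which there exists a nonzero $h\in C(X)$ with $h\circ S=\lambda h$ (identified with constant functions); for $k\ge1$, $G_k(S)=\{h\in C(X): |h(x)|=1\ \forall x,\ (h\circ S)\overline h\in G_{k-1}(S)\}$. *)

theory Defs
  imports "HOL-Analysis.Analysis"
begin

definition self_map :: "'a::metric_space set \<Rightarrow> ('a \<Rightarrow> 'a) \<Rightarrow> bool" where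
  "self_map X S \<longleftrightarrow> continuous_on X S \<and> S ` X \<subseteq> X"

definition transitive_map :: "'a::metric_space set \<Rightarrow> ('a \<Rightarrow> 'a) \<Rightarrow> bool" where
  "transitive_map X S \<longleftrightarrow> (\<exists>x\<in>X. X \<subseteq> closure (range (\<lambda>n. (S ^^ n) x)))"

text \<open>C(X): continuous complex functions on X, represented canonically
  (extended by 0 outside X).\<close>
definition CX :: "'a::metric_space set \<Rightarrow> ('a \<Rightarrow> complex) set" where
  "CX X = {h. continuous_on X h \<and> (\<forall>x. x \<notin> X \<longrightarrow> h x = 0)}"

definition restrX :: "'a::metric_space set \<Rightarrow> ('a \<Rightarrow> complex) \<Rightarrow> ('a \<Rightarrow> complex)" where
  "restrX X f = (\<lambda>x. if x \<in> X then f x else 0)"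

text \<open>G_0(S): eigenvalues lambda, identified with constant functions on X;
  G_k(S) for k >= 1 as in the paper.\<close>
fun G :: "'a::metric_space set \<Rightarrow> nat \<Rightarrow> ('a \<Rightarrow> 'a) \<Rightarrow> ('a \<Rightarrow> complex) set" where
  "G X 0 S = {restrX X (\<lambda>_. c) | c. \<exists>h\<in>CX X. (\<exists>x\<in>X. h x \<noteq> 0) \<and>
                 (\<forall>x\<in>X. h (S x) = c * h x)}"
| "G X (Suc k) S = {h \<in> CX X. (\<forall>x\<in>X. cmod (h x) = 1) \<and>
                 restrX X (\<lambda>x. h (S x) * cnj (h x)) \<in> G X k S}"

end

theory Submission
  imports Defs
begin

text \<open>Let D_S h = (h \<circ> S) * conj h (\<open>mdiff X S h\<close> below), so that h \<in> G_{k+1}(S) iff h is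
  circle-valued and D_S h \<in> G_k(S); the operators D_T1 and D_T2 commute when T1 and T2 do.
  If h \<in> G_1(T1), i.e. D_T1 h = c with |c| = 1, then D_T1 (D_T2 h) = D_T2 c = 1, so D_T2 h is a
  continuous T1-invariant function, hence constant by transitivity of T1: h is an eigenfunction
  of T2 and h \<in> G_1(T2). At higher levels put u = D_T2 h; then D_T1 u = D_T2 (D_T1 h), and the
  equalities G_j(T1) = G_j(T2) at the two previous levels carry first D_T1 h, then D_T1 u and
  finally u from T1 to T2. The case of T and T^m is that of a commuting pair.\<close>

definition unimodular :: "'a::metric_space set \<Rightarrow> ('a \<Rightarrow> complex) set" where
  "unimodular X = {h \<in> CX X. \<forall>x\<in>X. cmod (h x) = 1}"

definition mdiff :: "'a::metric_space set \<Rightarrow> ('a \<Rightarrow> 'a) \<Rightarrow> ('a \<Rightarrow> complex) \<Rightarrow> ('a \<Rightarrow> complex)"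
  where "mdiff X S h = restrX X (\<lambda>x. h (S x) * cnj (h x))"

lemma G_Suc_iff: "h \<in> G X (Suc k) S \<longleftrightarrow> h \<in> unimodular X \<and> mdiff X S h \<in> G X k S"
  by (auto simp: unimodular_def mdiff_def)

declare G.simps(2) [simp del]

lemma self_mapD: "self_map X S \<Longrightarrow> x \<in> X \<Longrightarrow> S x \<in> X"
  unfolding self_map_def by blast

lemma self_map_funpow: "self_map X S \<Longrightarrow> self_map X (S ^^ m)"
proof (induction m)
  case 0
  then show ?case by (simp add: self_map_def)
next
  case (Suc m)
  then have "continuous_on X (S ^^ m)" "(S ^^ m) ` X \<subseteq> X" "continuous_on X S" "S ` X \<subseteq> X"
    by (auto simp: self_map_def)
  then have "continuous_on X (S \<circ> (S ^^ m))"
    by (intro continuous_on_compose) (auto intro: continuous_on_subset)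
  then show ?case
    using \<open>(S ^^ m) ` X \<subseteq> X\<close> \<open>S ` X \<subseteq> X\<close> by (auto simp: self_map_def)
qed

lemma transitive_map_nonempty: "transitive_map X S \<Longrightarrow> X \<noteq> {}"
  by (auto simp: transitive_map_def)

lemma transitive_invariant_constant:
  fixes g :: "'a::metric_space \<Rightarrow> 'b::t1_space"
  assumes "closed X" "self_map X S" "transitive_map X S" "continuous_on X g"
    and invariant: "\<forall>x\<in>X. g (S x) = g x"
  shows "\<exists>c. \<forall>x\<in>X. g x = c"
proof -
  obtain x0 where "x0 \<in> X" and dense: "X \<subseteq> closure (range (\<lambda>n. (S ^^ n) x0))"
    using assms(3) by (auto simp: transitive_map_def)
  have orbit: "(S ^^ n) x0 \<in> X" for n
    by (induction n) (auto simp: \<open>x0 \<in> X\<close> self_mapD[OF assms(2)])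
  have "g ((S ^^ n) x0) = g x0" for n
    by (induction n) (auto simp: invariant orbit)
  moreover have "closure (range (\<lambda>n. (S ^^ n) x0)) \<subseteq> X"
    using orbit \<open>closed X\<close> by (intro closure_minimal) auto
  ultimately have "g ` closure (range (\<lambda>n. (S ^^ n) x0)) \<subseteq> {g x0}"
    using \<open>continuous_on X g\<close>
    by (intro image_closure_subset) (auto intro: continuous_on_subset)
  then show ?thesis using dense by blast
qed

lemma unit_cnj_mult: "cmod u = 1 \<Longrightarrow> u * cnj u = 1"
  using complex_norm_square[of u] by simp

lemma mult_cnj_unit_eq_iff:
  assumes "cmod u = 1"
  shows "v * cnj u = c \<longleftrightarrow> v = c * u"
proof
  have unit: "cnj u * u = 1"
    using unit_cnj_mult[OF assms] by (simp add: mult.commute)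
  show "v = c * u" if "v * cnj u = c"
  proof -
    have "v = v * (cnj u * u)" using unit by simp
    also have "\<dots> = c * u" using that by (simp add: mult.assoc)
    finally show ?thesis .
  qed
  show "v * cnj u = c" if "v = c * u"
    using that unit_cnj_mult[OF assms] by (simp add: mult.assoc)
qed

lemma mdiff_unimodular:
  assumes "self_map X S" "h \<in> unimodular X"
  shows "mdiff X S h \<in> unimodular X"
proof -
  from assms have "continuous_on X h" "continuous_on X (\<lambda>x. h (S x))"
    by (auto simp: unimodular_def CX_def self_map_def intro: continuous_on_compose2)
  then have "continuous_on X (\<lambda>x. h (S x) * cnj (h x))"
    by (intro continuous_intros)
  then have "continuous_on X (mdiff X S h)"
    by (rule continuous_on_cong[THEN iffD1, rotated 2]) (simp_all add: mdiff_def restrX_def)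
  then show ?thesis
    using assms self_mapD[OF assms(1)]
    by (auto simp: unimodular_def CX_def mdiff_def restrX_def norm_mult)
qed

lemma mdiff_commute:
  assumes "self_map X T1" "self_map X T2" "\<forall>x\<in>X. T1 (T2 x) = T2 (T1 x)"
  shows "mdiff X T1 (mdiff X T2 h) = mdiff X T2 (mdiff X T1 h)"
  using assms self_mapD[OF assms(1)] self_mapD[OF assms(2)]
  by (auto simp: mdiff_def restrX_def mult_ac)

lemma mdiff_const:
  assumes "self_map X S" "cmod c = 1"
  shows "mdiff X S (restrX X (\<lambda>_. c)) = restrX X (\<lambda>_. 1)"
  using self_mapD[OF assms(1)] unit_cnj_mult[OF assms(2)]
  by (auto simp: mdiff_def restrX_def)

lemma mdiff_eq_const_iff:
  assumes "h \<in> unimodular X"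
  shows "mdiff X S h = restrX X (\<lambda>_. c) \<longleftrightarrow> (\<forall>x\<in>X. h (S x) = c * h x)"
proof -
  have "h (S x) * cnj (h x) = c \<longleftrightarrow> h (S x) = c * h x" if "x \<in> X" for x
    using assms that by (intro mult_cnj_unit_eq_iff) (simp add: unimodular_def)
  then show ?thesis
    by (auto simp: mdiff_def restrX_def fun_eq_iff)
qed

lemma const_in_G0:
  assumes "X \<noteq> {}" "h \<in> unimodular X" "mdiff X S h = restrX X (\<lambda>_. c)"
  shows "restrX X (\<lambda>_. c) \<in> G X 0 S"
proof -
  have "\<exists>x\<in>X. h x \<noteq> 0"
    using assms(1,2) by (force simp: unimodular_def)
  moreover have "\<forall>x\<in>X. h (S x) = c * h x"
    using assms(2,3) by (simp add: mdiff_eq_const_iff)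
  ultimately show ?thesis
    using assms(2) unfolding unimodular_def by auto
qed

lemma G1_subset_commuting:
  assumes "closed X" "self_map X T1" "self_map X T2" "transitive_map X T1"
    and commute: "\<forall>x\<in>X. T1 (T2 x) = T2 (T1 x)"
  shows "G X (Suc 0) T1 \<subseteq> G X (Suc 0) T2"
proof
  fix h assume "h \<in> G X (Suc 0) T1"
  then obtain c where h: "h \<in> unimodular X" and c: "mdiff X T1 h = restrX X (\<lambda>_. c)"
    by (auto simp: G_Suc_iff)
  have "X \<noteq> {}" using assms(4) by (rule transitive_map_nonempty)
  then have "cmod c = 1"
    using mdiff_unimodular[OF assms(2) h] c by (auto simp: unimodular_def restrX_def)
  define u where "u = mdiff X T2 h"
  have u: "u \<in> unimodular X"
    unfolding u_def using assms(3) h by (rule mdiff_unimodular)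
  have "mdiff X T1 u = restrX X (\<lambda>_. 1)"
    using mdiff_commute[OF assms(2,3) commute] mdiff_const[OF assms(3) \<open>cmod c = 1\<close>] c
    by (simp add: u_def)
  then have "\<forall>x\<in>X. u (T1 x) = u x"
    using u by (simp add: mdiff_eq_const_iff)
  moreover have "continuous_on X u"
    using u by (simp add: unimodular_def CX_def)
  ultimately obtain d where "\<forall>x\<in>X. u x = d"
    using transitive_invariant_constant[OF assms(1,2,4)] by blast
  then have "u = restrX X (\<lambda>_. d)"
    using u by (auto simp: unimodular_def CX_def restrX_def)
  then have "u \<in> G X 0 T2"
    using const_in_G0[OF \<open>X \<noteq> {}\<close> h] by (simp add: u_def)
  then show "h \<in> G X (Suc 0) T2"
    using h by (simp add: G_Suc_iff u_def)
qed

lemma G_Suc_Suc_subset_commuting: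
  assumes "X \<noteq> {}" "self_map X T1" "self_map X T2"
    and commute: "\<forall>x\<in>X. T1 (T2 x) = T2 (T1 x)"
    and eq_Suc: "G X (Suc j) T1 = G X (Suc j) T2"
    and eq: "j \<noteq> 0 \<Longrightarrow> G X j T1 = G X j T2"
  shows "G X (Suc (Suc j)) T1 \<subseteq> G X (Suc (Suc j)) T2"
proof
  fix h assume "h \<in> G X (Suc (Suc j)) T1"
  then have h: "h \<in> unimodular X" and "mdiff X T1 h \<in> G X (Suc j) T2"
    using eq_Suc by (auto simp: G_Suc_iff)
  then have "mdiff X T2 (mdiff X T1 h) \<in> G X j T2"
    by (simp add: G_Suc_iff)
  define u where "u = mdiff X T2 h"
  have u: "u \<in> unimodular X"
    unfolding u_def using assms(3) h by (rule mdiff_unimodular)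
  have "mdiff X T1 u \<in> G X j T2"
    using \<open>mdiff X T2 (mdiff X T1 h) \<in> G X j T2\<close> mdiff_commute[OF assms(2,3) commute]
    by (simp add: u_def)
  then have "mdiff X T1 u \<in> G X j T1"
  proof (cases "j = 0")
    case True
    then obtain c where "mdiff X T1 u = restrX X (\<lambda>_. c)"
      using \<open>mdiff X T1 u \<in> G X j T2\<close> by auto
    then show ?thesis
      using const_in_G0[OF assms(1) u] True by simp
  next
    case False
    then show ?thesis
      using \<open>mdiff X T1 u \<in> G X j T2\<close> eq by simp
  qed
  then have "u \<in> G X (Suc j) T1"
    using u by (simp add: G_Suc_iff)
  then have "u \<in> G X (Suc j) T2"
    using eq_Suc by simp
  then show "h \<in> G X (Suc (Suc j)) T2"
    using h by (simp add: G_Suc_iff u_def)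
qed

lemma G_Suc_eq_commuting:
  assumes "closed X" "self_map X T1" "self_map X T2" "transitive_map X T1" "transitive_map X T2"
    and commute: "\<forall>x\<in>X. T1 (T2 x) = T2 (T1 x)"
  shows "G X (Suc k) T1 = G X (Suc k) T2"
proof (induction k rule: less_induct)
  case (less k)
  have commute': "\<forall>x\<in>X. T2 (T1 x) = T1 (T2 x)"
    using commute by simp
  have "X \<noteq> {}" using assms(4) by (rule transitive_map_nonempty)
  show ?case
  proof (cases k)
    case 0
    then show ?thesis
      using G1_subset_commuting[OF assms(1,2,3,4) commute]
        G1_subset_commuting[OF assms(1,3,2,5) commute'] by blast
  next
    case (Suc j)
    have eq_Suc: "G X (Suc j) T1 = G X (Suc j) T2"
      using less.IH Suc by simp
    have eq: "G X j T1 = G X j T2" if "j \<noteq> 0"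
      using less.IH Suc that by (cases j) auto
    show ?thesis
      using Suc G_Suc_Suc_subset_commuting[OF \<open>X \<noteq> {}\<close> assms(2,3) commute eq_Suc eq]
        G_Suc_Suc_subset_commuting[OF \<open>X \<noteq> {}\<close> assms(3,2) commute' eq_Suc[symmetric] eq[symmetric]]
      by blast
  qed
qed

theorem lemma2p2:
  fixes X :: "'a::metric_space set"
  assumes "compact X"
  shows "(\<forall>T1 T2. self_map X T1 \<and> self_map X T2 \<and> transitive_map X T1 \<and> transitive_map X T2
            \<and> (\<forall>x\<in>X. T1 (T2 x) = T2 (T1 x))
            \<longrightarrow> (\<forall>k\<ge>1. G X k T1 = G X k T2))
       \<and> (\<forall>T m. self_map X T \<and> m \<ge> 2 \<and> transitive_map X T \<and> transitive_map X (T ^^ m)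
            \<longrightarrow> (\<forall>k\<ge>1. G X k T = G X k (T ^^ m)))"
proof -
  have commuting: "G X k T1 = G X k T2"
    if "self_map X T1" "self_map X T2" "transitive_map X T1" "transitive_map X T2"
      "\<forall>x\<in>X. T1 (T2 x) = T2 (T1 x)" "k \<ge> 1" for T1 T2 k
    using G_Suc_eq_commuting[OF compact_imp_closed[OF assms] that(1-5), of "k - 1"] that(6)
    by simp
  moreover have "G X k T = G X k (T ^^ m)"
    if "self_map X T" "transitive_map X T" "transitive_map X (T ^^ m)" "k \<ge> 1" for T m k
    using commuting[OF that(1) self_map_funpow[OF that(1)] that(2,3) _ that(4)]
    by (simp add: funpow_swap1)
  ultimately show ?thesis
    by blast
qed

end
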